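(* Let $\Psi$ be a finite set of contexts, $\psi_t$ a target context, and $D$ a distribution such that $D(x\mid\psi)>0$ for all $\psi\in\Psi$ and $x\models\psi$, and such that $\Psi$ is representative for $\psi_t$ with respect to every $h\in\mathcal{H}$. Then for every $\epsilon,\delta\in(0,1)$ there exist integers $t_\psi(\epsilon,\delta)$, $\psi\in\Psi$, such that if the training set $S$ contains, for every $\psi\in\Psi$, at least $t_\psi(\epsilon,\delta)$ examples with context $\psi$ (drawn i.i.d. from $D(x,y\mid\psi)$), then any $h\in\mathcal{H}$ minimizing $\sum_{\psi\in\Psi}L_{S,\psi}(h)$ satisfies $$\Pr\Big(L_{D,\psi_t}(h)>\min_{h'\in\mathcal{H}}\sum_{\psi\in\Psi}L_{S,\psi}(h')+\epsilon\Big)<\delta.$$ In particular, in the realizable setting (where some $h'\in\mathcal{H}$ has $\sum_{\psi}L_{S,\psi}(h')=0$) this gives $\Pr(L_{D,\psi_t}(h)>\epsilon)<\delta$.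
   Context: Let $X_1,\dots,X_n$ be Boolean variables and $\Phi=\{\phi_1,\dots,\phi_m\}$ candidate formulas; $\phi(c)=\bigwedge_{j:c_j=1}\phi_j$ for $c\in\{0,1\}^m$, $f_w(x)=\sum_jw_j\mathbb{1}[x\models\phi_j]$ for $w\in[-1,1]^m$. A context is a Boolean formula. The MAX-SAT classifier $h_{c,w}(x,\psi)=1$ iff $x\models\phi(c)\wedge\psi$ and $f_w(x)\ge f_w(x')$ for all $x'\models\phi(c)\wedge\psi$, else $0$; $\mathcal{H}$ is the set of these. A ground-truth $h^*\in\mathcal{H}$ labels examples, $y=h^*(x,\psi)$. $D(x\mid\psi)$ is a distribution over assignments satisfying $\psi$; $L_{D,\psi}(h)=\sum_x\mathbb{1}[h(x,\psi)\neq h^*(x,\psi)]D(x\mid\psi)$. For the training set $S$ of triples $(\psi_k,x_k,y_k)$, and $S_\psi$ the examples in $S$ with context $\psi$, $L_{S,\psi}(h)=\frac{1}{|S_\psi|}\sum_{(\psi,x,y)\in S_\psi}\mathbb{1}[h(x,\psi)\neq y]$. Representativeness: for $h\in\mathcal{H}$, let $\chi(\psi,x,\psi')$ hold iff $x\models\psi\wedge\psi'$ and ($h(x,\psi)\neq h^*(x,\psi)\Rightarrow h(x,\psi')\neq h^*(x,\psi')$); $\#(\psi,x)=|\{\psi'\in\Psi:\chi(\psi,x,\psi')\}|$; $\Psi$ is representative for $\psi_t$ w.r.t. $h$ iff $\#(\psi_t,x)>0$ for all assignments $x$. *)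

theory Defs
  imports "HOL-Probability.Probability"
begin

text \<open>Boolean formulas over variables of type 'v (the variables X_1..X_n;
  n = CARD('v)). An assignment is a function 'v => bool.\<close>

datatype 'v form =
    TT | FF | Var 'v | Neg "'v form" | Conj "'v form" "'v form" | Disj "'v form" "'v form"

fun models :: "('v \<Rightarrow> bool) \<Rightarrow> 'v form \<Rightarrow> bool" where
  "models x TT = True"
| "models x FF = False"
| "models x (Var v) = x v"
| "models x (Neg p) = (\<not> models x p)"
| "models x (Conj p q) = (models x p \<and> models x q)"
| "models x (Disj p q) = (models x p \<or> models x q)"

text \<open>phi(c) = conjunction of the phi_j with c_j = 1 (empty conjunction = TT).
  Candidate formulas Phi are the list phis of length m.\<close>
definition phi_c :: "'v form list \<Rightarrow> bool list \<Rightarrow> 'v form" where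
  "phi_c phis c = foldr Conj [phis ! j. j \<leftarrow> [0..<length phis], c ! j] TT"

definition f_w :: "'v form list \<Rightarrow> real list \<Rightarrow> ('v \<Rightarrow> bool) \<Rightarrow> real" where
  "f_w phis w x = (\<Sum>j<length phis. w ! j * (if models x (phis ! j) then 1 else 0))"

definition maxsat_h :: "'v form list \<Rightarrow> bool list \<Rightarrow> real list \<Rightarrow> ('v \<Rightarrow> bool) \<Rightarrow> 'v form \<Rightarrow> bool" where
  "maxsat_h phis c w x psi =
     (models x (Conj (phi_c phis c) psi) \<and>
      (\<forall>x'. models x' (Conj (phi_c phis c) psi) \<longrightarrow> f_w phis w x' \<le> f_w phis w x))"

definition hyp_class :: "'v form list \<Rightarrow> (('v \<Rightarrow> bool) \<Rightarrow> 'v form \<Rightarrow> bool) set" where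
  "hyp_class phis = {maxsat_h phis c w | c w.
      length c = length phis \<and> length w = length phis \<and> set w \<subseteq> {-1..1}}"

text \<open>True loss L_{D,psi}(h); D psi is the distribution D(x | psi).\<close>
definition true_loss :: "('v::finite form \<Rightarrow> ('v \<Rightarrow> bool) pmf) \<Rightarrow>
    (('v \<Rightarrow> bool) \<Rightarrow> 'v form \<Rightarrow> bool) \<Rightarrow> 'v form \<Rightarrow> (('v \<Rightarrow> bool) \<Rightarrow> 'v form \<Rightarrow> bool) \<Rightarrow> real" where
  "true_loss D hstar psi h =
     (\<Sum>x\<in>UNIV. (if h x psi \<noteq> hstar x psi then 1 else 0) * pmf (D psi) x)"

text \<open>Training set: S psi is the list (multiset) of assignments x of the examples
  (psi, x, hstar(x,psi)) in S with context psi, i.e. S_psi.  Empirical loss L_{S,psi}(h).\<close>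
definition emp_loss :: "(('v \<Rightarrow> bool) \<Rightarrow> 'v form \<Rightarrow> bool) \<Rightarrow> ('v form \<Rightarrow> ('v \<Rightarrow> bool) list) \<Rightarrow>
    'v form \<Rightarrow> (('v \<Rightarrow> bool) \<Rightarrow> 'v form \<Rightarrow> bool) \<Rightarrow> real" where
  "emp_loss hstar S psi h =
     (\<Sum>x\<leftarrow>S psi. if h x psi \<noteq> hstar x psi then 1 else 0) / real (length (S psi))"

definition chi :: "(('v \<Rightarrow> bool) \<Rightarrow> 'v form \<Rightarrow> bool) \<Rightarrow> (('v \<Rightarrow> bool) \<Rightarrow> 'v form \<Rightarrow> bool) \<Rightarrow>
    'v form \<Rightarrow> ('v \<Rightarrow> bool) \<Rightarrow> 'v form \<Rightarrow> bool" where
  "chi hstar h psi x psi' =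
     (models x (Conj psi psi') \<and> (h x psi \<noteq> hstar x psi \<longrightarrow> h x psi' \<noteq> hstar x psi'))"

definition count_rep :: "'v form set \<Rightarrow> (('v \<Rightarrow> bool) \<Rightarrow> 'v form \<Rightarrow> bool) \<Rightarrow>
    (('v \<Rightarrow> bool) \<Rightarrow> 'v form \<Rightarrow> bool) \<Rightarrow> 'v form \<Rightarrow> ('v \<Rightarrow> bool) \<Rightarrow> nat" where
  "count_rep Psi hstar h psi x = card {psi' \<in> Psi. chi hstar h psi x psi'}"

definition representative :: "'v form set \<Rightarrow> 'v form \<Rightarrow> (('v \<Rightarrow> bool) \<Rightarrow> 'v form \<Rightarrow> bool) \<Rightarrow>
    (('v \<Rightarrow> bool) \<Rightarrow> 'v form \<Rightarrow> bool) \<Rightarrow> bool" where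
  "representative Psi psit hstar h = (\<forall>x. models x psit \<longrightarrow> count_rep Psi hstar h psit x > 0)"

text \<open>Distribution of the training set: for each psi in Psi, k psi i.i.d. draws from D(x | psi)
  (labels are determined by hstar); contexts outside Psi get no examples.\<close>
definition sample_pmf :: "'v form set \<Rightarrow> ('v form \<Rightarrow> ('v \<Rightarrow> bool) pmf) \<Rightarrow> ('v form \<Rightarrow> nat) \<Rightarrow>
    ('v form \<Rightarrow> ('v \<Rightarrow> bool) list) pmf" where
  "sample_pmf Psi D k = Pi_pmf Psi [] (\<lambda>psi. replicate_pmf (k psi) (D psi))"

end

theory Submission
  imports Defs
begin

text \<open>Since every assignment of every training context has positive probability and there are
  only finitely many of them, a large enough sample contains all of them with probability
  close to one. On such a covering sample an empirical risk minimiser has empirical loss 0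
  (the target \<open>hstar\<close> itself does) and therefore agrees with \<open>hstar\<close> on every assignment of
  every training context; representativeness transfers this agreement to the target context,
  so its true loss there is 0 as well. Both bad events are thus contained in the event that
  the sample is not covering.\<close>

definition covering :: "'v form set \<Rightarrow> ('v form \<Rightarrow> ('v \<Rightarrow> bool) list) \<Rightarrow> bool" where
  "covering Psi S \<longleftrightarrow> (\<forall>psi\<in>Psi. \<forall>x. models x psi \<longrightarrow> x \<in> set (S psi))"

lemma replicate_pmf_Suc_conv_pair_pmf:
  "replicate_pmf (Suc n) p = map_pmf (\<lambda>(y, xs). y # xs) (pair_pmf p (replicate_pmf n p))"
  by (simp add: pair_pmf_def map_pmf_def bind_assoc_pmf bind_return_pmf)

lemma prob_replicate_pmf_not_in_set:
  fixes p :: "'a::countable pmf"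
  shows "measure_pmf.prob (replicate_pmf n p) {xs. x \<notin> set xs} = (1 - pmf p x) ^ n"
proof (induction n)
  case 0
  then show ?case by simp
next
  case (Suc n)
  have "(\<lambda>(y, xs). y # xs) -` {xs. x \<notin> set xs} = (UNIV - {x}) \<times> {xs. x \<notin> set xs}"
    by auto
  moreover have "measure_pmf.prob p (UNIV - {x}) = 1 - pmf p x"
    using measure_pmf.prob_compl[of "{x}" p] by (simp add: measure_pmf_single Compl_eq_Diff_UNIV)
  ultimately show ?case
    unfolding replicate_pmf_Suc_conv_pair_pmf measure_map_pmf
    by (simp add: measure_pmf_prob_product Suc)
qed

lemma prob_sample_pmf_not_in_set:
  fixes D :: "'v::finite form \<Rightarrow> ('v \<Rightarrow> bool) pmf"
  assumes "finite Psi" "psi \<in> Psi"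
  shows "measure_pmf.prob (sample_pmf Psi D k) {S. x \<notin> set (S psi)} = (1 - pmf (D psi) x) ^ k psi"
proof -
  have "measure_pmf.prob (sample_pmf Psi D k) {S. x \<notin> set (S psi)}
      = measure_pmf.prob (map_pmf (\<lambda>S. S psi) (sample_pmf Psi D k)) {xs. x \<notin> set xs}"
    by (simp add: measure_map_pmf vimage_def)
  also have "\<dots> = measure_pmf.prob (replicate_pmf (k psi) (D psi)) {xs. x \<notin> set xs}"
    unfolding sample_pmf_def using assms by (simp add: Pi_pmf_component)
  finally show ?thesis by (simp add: prob_replicate_pmf_not_in_set)
qed

lemma finite_context_models:
  fixes Psi :: "'v::finite form set"
  assumes "finite Psi"
  shows "finite {(psi, x). psi \<in> Psi \<and> models x psi}"
  by (rule finite_subset[of _ "Psi \<times> UNIV"]) (auto simp: assms)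

lemma prob_not_covering_le:
  fixes D :: "'v::finite form \<Rightarrow> ('v \<Rightarrow> bool) pmf"
  assumes fin: "finite Psi"
    and q: "\<And>psi x. psi \<in> Psi \<Longrightarrow> models x psi \<Longrightarrow> 1 - pmf (D psi) x \<le> q"
    and "q < 1" and n: "\<forall>psi\<in>Psi. n \<le> k psi"
  shows "measure_pmf.prob (sample_pmf Psi D k) {S. \<not> covering Psi S}
           \<le> real (card {(psi, x). psi \<in> Psi \<and> models x psi}) * q ^ n"
proof -
  define P where "P = {(psi, x). psi \<in> Psi \<and> models x psi}"
  have "finite P"
    unfolding P_def using fin by (rule finite_context_models)
  have miss: "measure_pmf.prob (sample_pmf Psi D k) {S. x \<notin> set (S psi)} \<le> q ^ n"
    if "(psi, x) \<in> P" for psi x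
  proof -
    have psi: "psi \<in> Psi" and "models x psi" using that by (auto simp: P_def)
    have "0 \<le> 1 - pmf (D psi) x" by (simp add: pmf_le_1)
    then have "(1 - pmf (D psi) x) ^ k psi \<le> q ^ k psi"
      using q[OF psi \<open>models x psi\<close>] by (intro power_mono)
    also have "\<dots> \<le> q ^ n"
      using n psi \<open>q < 1\<close> \<open>0 \<le> 1 - pmf (D psi) x\<close> q[OF psi \<open>models x psi\<close>]
      by (intro power_decreasing) auto
    finally show ?thesis using fin psi by (simp add: prob_sample_pmf_not_in_set)
  qed
  have "{S. \<not> covering Psi S} = (\<Union>(psi, x)\<in>P. {S. x \<notin> set (S psi)})"
    by (auto simp: covering_def P_def)
  then have "measure_pmf.prob (sample_pmf Psi D k) {S. \<not> covering Psi S}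
      \<le> (\<Sum>(psi, x)\<in>P. measure_pmf.prob (sample_pmf Psi D k) {S. x \<notin> set (S psi)})"
    using measure_pmf.finite_measure_subadditive_finite[OF \<open>finite P\<close>, of "\<lambda>(psi, x). {S. x \<notin> set (S psi)}"]
    by (simp add: case_prod_unfold)
  also have "\<dots> \<le> (\<Sum>_\<in>P. q ^ n)"
    by (rule sum_mono) (use miss in auto)
  finally show ?thesis by (simp add: P_def)
qed

lemma eventually_prob_not_covering_less:
  fixes D :: "'v::finite form \<Rightarrow> ('v \<Rightarrow> bool) pmf"
  assumes fin: "finite Psi"
    and D_pos: "\<And>psi x. psi \<in> Psi \<Longrightarrow> models x psi \<Longrightarrow> pmf (D psi) x > 0"
    and "\<delta> > 0"
  obtains n where "\<And>k. \<forall>psi\<in>Psi. n \<le> k psi \<Longrightarrow>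
    measure_pmf.prob (sample_pmf Psi D k) {S. \<not> covering Psi S} < \<delta>"
proof -
  define P where "P = {(psi, x). psi \<in> Psi \<and> models x psi}"
  have "finite P"
    unfolding P_def using fin by (rule finite_context_models)
  define q where "q = Max (insert 0 ((\<lambda>(psi, x). 1 - pmf (D psi) x) ` P))"
  have q_ge: "1 - pmf (D psi) x \<le> q" if "psi \<in> Psi" "models x psi" for psi x
    unfolding q_def using \<open>finite P\<close> that by (intro Max_ge) (auto simp: P_def)
  have "q < 1"
    unfolding q_def using \<open>finite P\<close> D_pos by (subst Max_less_iff) (auto simp: P_def)
  have "0 \<le> q" unfolding q_def using \<open>finite P\<close> by simp
  obtain n where n: "q ^ n < \<delta> / (real (card P) + 1)"
    using real_arch_pow_inv[OF _ \<open>q < 1\<close>, of "\<delta> / (real (card P) + 1)"] \<open>\<delta> > 0\<close> by auto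
  show ?thesis
  proof (rule that)
    fix k assume "\<forall>psi\<in>Psi. n \<le> k psi"
    then have "measure_pmf.prob (sample_pmf Psi D k) {S. \<not> covering Psi S} \<le> real (card P) * q ^ n"
      using prob_not_covering_le[OF fin q_ge \<open>q < 1\<close>] by (simp add: P_def)
    also have "\<dots> \<le> real (card P) * (\<delta> / (real (card P) + 1))"
      using n by (intro mult_left_mono) auto
    also have "\<dots> < \<delta>" using \<open>\<delta> > 0\<close> by (simp add: field_simps)
    finally show "measure_pmf.prob (sample_pmf Psi D k) {S. \<not> covering Psi S} < \<delta>" .
  qed
qed

definition is_erm :: "(('v \<Rightarrow> bool) \<Rightarrow> 'v form \<Rightarrow> bool) set \<Rightarrow> (('v \<Rightarrow> bool) \<Rightarrow> 'v form \<Rightarrow> bool) \<Rightarrow>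
    'v form set \<Rightarrow> ('v form \<Rightarrow> ('v \<Rightarrow> bool) list) \<Rightarrow> (('v \<Rightarrow> bool) \<Rightarrow> 'v form \<Rightarrow> bool) \<Rightarrow> bool" where
  "is_erm H hstar Psi S h \<longleftrightarrow>
     (\<forall>h'\<in>H. (\<Sum>psi\<in>Psi. emp_loss hstar S psi h) \<le> (\<Sum>psi\<in>Psi. emp_loss hstar S psi h'))"

lemma emp_loss_nonneg: "0 \<le> emp_loss hstar S psi h"
  unfolding emp_loss_def by (intro divide_nonneg_nonneg sum_list_nonneg) auto

lemma emp_loss_self: "emp_loss hstar S psi hstar = 0"
  by (simp add: emp_loss_def)

lemma emp_loss_eq_0_imp_agree:
  assumes "emp_loss hstar S psi h = 0" "x \<in> set (S psi)"
  shows "h x psi = hstar x psi"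
proof -
  have "S psi \<noteq> []" using assms(2) by auto
  then have "sum_list (map (\<lambda>x. if h x psi \<noteq> hstar x psi then 1 else 0 :: real) (S psi)) = 0"
    using assms(1) by (simp add: emp_loss_def)
  then have "\<forall>y\<in>set (map (\<lambda>x. if h x psi \<noteq> hstar x psi then 1 else 0 :: real) (S psi)). y = 0"
    by (subst (asm) sum_list_nonneg_eq_0_iff) auto
  then show ?thesis using assms(2) by force
qed

lemma sum_emp_loss_erm_eq_0:
  assumes "hstar \<in> H" "is_erm H hstar Psi S h"
  shows "(\<Sum>psi\<in>Psi. emp_loss hstar S psi h) = 0"
proof (rule antisym)
  show "(\<Sum>psi\<in>Psi. emp_loss hstar S psi h) \<le> 0"
    using assms by (auto simp: is_erm_def emp_loss_self)
  show "0 \<le> (\<Sum>psi\<in>Psi. emp_loss hstar S psi h)"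
    by (intro sum_nonneg emp_loss_nonneg)
qed

lemma agree_of_sum_emp_loss_eq_0:
  assumes "finite Psi" "(\<Sum>psi\<in>Psi. emp_loss hstar S psi h) = 0"
    and "covering Psi S" "psi \<in> Psi" "models x psi"
  shows "h x psi = hstar x psi"
proof -
  have "emp_loss hstar S psi h = 0"
    using assms(1,2,4) sum_nonneg_eq_0_iff[of Psi "\<lambda>psi. emp_loss hstar S psi h"]
    by (simp add: emp_loss_nonneg)
  moreover have "x \<in> set (S psi)" using assms(3-5) by (simp add: covering_def)
  ultimately show ?thesis by (rule emp_loss_eq_0_imp_agree)
qed

lemma true_loss_eq_0_if_representative:
  assumes rep: "representative Psi psit hstar h"
    and supp: "set_pmf (D psit) \<subseteq> {x. models x psit}"
    and agree: "\<And>psi x. psi \<in> Psi \<Longrightarrow> models x psi \<Longrightarrow> h x psi = hstar x psi"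
  shows "true_loss D hstar psit h = 0"
proof -
  have "h x psit = hstar x psit" if "models x psit" for x
  proof (rule ccontr)
    assume ne: "h x psit \<noteq> hstar x psit"
    have "count_rep Psi hstar h psit x > 0"
      using rep that by (simp add: representative_def)
    then obtain psi' where "psi' \<in> Psi" "chi hstar h psit x psi'"
      unfolding count_rep_def by (metis (no_types, lifting) card.empty empty_Collect_eq less_irrefl)
    then show False using ne agree by (auto simp: chi_def)
  qed
  then have "(if h x psit \<noteq> hstar x psit then 1 else 0) * pmf (D psit) x = 0" for x
    using supp by (auto simp: set_pmf_iff)
  then show ?thesis unfolding true_loss_def by (intro sum.neutral) blast
qed

lemma true_loss_erm_on_covering_sample:
  assumes fin: "finite Psi" and hstar: "hstar \<in> H" and rep: "representative Psi psit hstar h"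
    and supp: "set_pmf (D psit) \<subseteq> {x. models x psit}"
    and cov: "covering Psi S" and erm: "is_erm H hstar Psi S h"
  shows "true_loss D hstar psit h = 0"
proof (rule true_loss_eq_0_if_representative[where D = D, OF rep supp])
  fix psi x assume "psi \<in> Psi" "models x psi"
  then show "h x psi = hstar x psi"
    by (rule agree_of_sum_emp_loss_eq_0[OF fin sum_emp_loss_erm_eq_0[OF hstar erm] cov])
qed

lemma eventually_prob_erm_true_loss_gt_less:
  fixes D :: "'v::finite form \<Rightarrow> ('v \<Rightarrow> bool) pmf"
  assumes hstar: "hstar \<in> H" and fin: "finite Psi"
    and supp: "set_pmf (D psit) \<subseteq> {x. models x psit}"
    and D_pos: "\<And>psi x. psi \<in> Psi \<Longrightarrow> models x psi \<Longrightarrow> pmf (D psi) x > 0"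
    and rep: "\<And>h. h \<in> H \<Longrightarrow> representative Psi psit hstar h"
    and "0 \<le> \<epsilon>" "0 < \<delta>"
  obtains n where "\<And>k. \<forall>psi\<in>Psi. n \<le> k psi \<Longrightarrow>
    measure_pmf.prob (sample_pmf Psi D k)
      {S. \<exists>h\<in>H. is_erm H hstar Psi S h \<and> true_loss D hstar psit h > \<epsilon>} < \<delta>"
proof -
  obtain n where n: "\<And>k. \<forall>psi\<in>Psi. n \<le> k psi \<Longrightarrow>
      measure_pmf.prob (sample_pmf Psi D k) {S. \<not> covering Psi S} < \<delta>"
    using eventually_prob_not_covering_less[of Psi D, OF fin D_pos \<open>0 < \<delta>\<close>] by blast
  have bad: "{S. \<exists>h\<in>H. is_erm H hstar Psi S h \<and> true_loss D hstar psit h > \<epsilon>} \<subseteq> {S. \<not> covering Psi S}"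
  proof
    fix S assume "S \<in> {S. \<exists>h\<in>H. is_erm H hstar Psi S h \<and> true_loss D hstar psit h > \<epsilon>}"
    then obtain h where "h \<in> H" "is_erm H hstar Psi S h" "true_loss D hstar psit h > \<epsilon>" by blast
    then show "S \<in> {S. \<not> covering Psi S}"
      using true_loss_erm_on_covering_sample[where D = D, OF fin hstar rep supp] \<open>0 \<le> \<epsilon>\<close> by auto
  qed
  show ?thesis
  proof (rule that)
    fix k assume "\<forall>psi\<in>Psi. n \<le> k psi"
    then show "measure_pmf.prob (sample_pmf Psi D k)
        {S. \<exists>h\<in>H. is_erm H hstar Psi S h \<and> true_loss D hstar psit h > \<epsilon>} < \<delta>"
      by (intro le_less_trans[OF measure_pmf.finite_measure_mono[OF bad] n]) simp_all
  qed
qed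

theorem theorem4:
  fixes phis :: "'v::finite form list"
    and Psi :: "'v form set"
    and psit :: "'v form"
    and D :: "'v form \<Rightarrow> ('v \<Rightarrow> bool) pmf"
    and hstar :: "('v \<Rightarrow> bool) \<Rightarrow> 'v form \<Rightarrow> bool"
  assumes hstar: "hstar \<in> hyp_class phis"
    and fin: "finite Psi"
    and D_supp: "\<And>psi. psi \<in> insert psit Psi \<Longrightarrow> set_pmf (D psi) \<subseteq> {x. models x psi}"
    and D_pos: "\<And>psi x. psi \<in> Psi \<Longrightarrow> models x psi \<Longrightarrow> pmf (D psi) x > 0"
    and rep: "\<And>h. h \<in> hyp_class phis \<Longrightarrow> representative Psi psit hstar h"
  shows "\<forall>\<epsilon> \<delta>. 0 < \<epsilon> \<and> \<epsilon> < 1 \<and> 0 < \<delta> \<and> \<delta> < 1 \<longrightarrow>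
          (\<exists>t :: 'v form \<Rightarrow> nat. \<forall>k :: 'v form \<Rightarrow> nat. (\<forall>psi\<in>Psi. t psi \<le> k psi) \<longrightarrow>
             measure_pmf.prob (sample_pmf Psi D k)
               {S. \<exists>h\<in>hyp_class phis.
                     (\<forall>h'\<in>hyp_class phis. (\<Sum>psi\<in>Psi. emp_loss hstar S psi h) \<le> (\<Sum>psi\<in>Psi. emp_loss hstar S psi h')) \<and>
                     true_loss D hstar psit h > (\<Sum>psi\<in>Psi. emp_loss hstar S psi h) + \<epsilon>} < \<delta>
           \<and> ((\<exists>h'\<in>hyp_class phis. \<forall>S. (\<Sum>psi\<in>Psi. emp_loss hstar S psi h') = 0) \<longrightarrow>
              measure_pmf.prob (sample_pmf Psi D k)
               {S. \<exists>h\<in>hyp_class phis.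
                     (\<forall>h'\<in>hyp_class phis. (\<Sum>psi\<in>Psi. emp_loss hstar S psi h) \<le> (\<Sum>psi\<in>Psi. emp_loss hstar S psi h')) \<and>
                     true_loss D hstar psit h > \<epsilon>} < \<delta>))"
    (is "\<forall>\<epsilon> \<delta>. ?range \<epsilon> \<delta> \<longrightarrow> ?bound \<epsilon> \<delta>")
proof (intro allI impI)
  fix \<epsilon> \<delta> :: real
  assume "?range \<epsilon> \<delta>"
  then have "0 \<le> \<epsilon>" "0 < \<delta>" by auto
  then obtain n where n: "\<And>k. \<forall>psi\<in>Psi. n \<le> k psi \<Longrightarrow>
      measure_pmf.prob (sample_pmf Psi D k)
        {S. \<exists>h\<in>hyp_class phis. is_erm (hyp_class phis) hstar Psi S h \<and> true_loss D hstar psit h > \<epsilon>} < \<delta>"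
    using eventually_prob_erm_true_loss_gt_less[where D = D, OF hstar fin D_supp[OF insertI1] D_pos rep]
    by blast
  have "{S. \<exists>h\<in>hyp_class phis. is_erm (hyp_class phis) hstar Psi S h \<and>
            true_loss D hstar psit h > (\<Sum>psi\<in>Psi. emp_loss hstar S psi h) + \<epsilon>}
        \<subseteq> {S. \<exists>h\<in>hyp_class phis. is_erm (hyp_class phis) hstar Psi S h \<and> true_loss D hstar psit h > \<epsilon>}"
    using sum_emp_loss_erm_eq_0[OF hstar] by auto
  note excess = le_less_trans[OF measure_pmf.finite_measure_mono[OF this] n]
  show "?bound \<epsilon> \<delta>"
    using n excess unfolding is_erm_def by (intro exI[of _ "\<lambda>_. n"]) simp
qed

end
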